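(* Let $f=e^{-\psi}\colon\mathbb R^d\to[0,\infty)$ be an upper semi-continuous log-concave function, $u\in\operatorname{supp}f$, $v\in\mathbb R^d$, $\nu\in\mathbb R$. Then $(v,\nu)\in N_{\operatorname{epi}\psi}((u,\psi(u)))$ if and only if $\bigl(v,-\nu/f(u)\bigr)\in N_{\mathrm{lift}(f)}((u,f(u)))$. Furthermore, $P_d\bigl(N_{\mathrm{lift}(f)}((u,f(u)))\bigr)\subseteq N_{[f\ge f(u)]}(u)$.
   Context: $\operatorname{supp}f=\{x:f(x)>0\}$; $\operatorname{epi}\psi=\{(x,\xi):\psi(x)<\infty,\xi\ge\psi(x)\}$. Lifting $\mathrm{lift}(f)=\{(x,y)\in\mathbb R^d\times\mathbb R:x\in\overline{\operatorname{supp}f},|y|\le f(x)\}$. Fréchet normal cone of $A\subset\mathbb R^n$ at $a_0\in A$: $N_A(a_0)=\{v:\forall\varepsilon>0\,\exists\delta>0:\langle v,a-a_0\rangle\le\varepsilon|a-a_0|\ \forall a\in A,|a-a_0|\le\delta\}$. $[f\ge t]=\{x:f(x)\ge t\}$. $P_d\colon\mathbb R^{d+1}\to\mathbb R^d$ is the orthogonal projection onto the first $d$ coordinates. *)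

theory Defs
  imports "HOL-Analysis.Analysis"
begin

definition supp :: "('a \<Rightarrow> real) \<Rightarrow> 'a set" where
  "supp f = {x. f x > 0}"

definition usc :: "('a::topological_space \<Rightarrow> real) \<Rightarrow> bool" where
  "usc f \<longleftrightarrow> (\<forall>x t. f x < t \<longrightarrow> (\<forall>\<^sub>F y in at x. f y < t))"

definition log_concave :: "('a::real_vector \<Rightarrow> real) \<Rightarrow> bool" where
  "log_concave f \<longleftrightarrow> (\<forall>x. f x \<ge> 0) \<and>
     (\<forall>x y t. 0 < t \<and> t < 1 \<longrightarrow>
        f x powr (1 - t) * f y powr t \<le> f ((1 - t) *\<^sub>R x + t *\<^sub>R y))"

definition psi :: "('a \<Rightarrow> real) \<Rightarrow> 'a \<Rightarrow> ereal" where
  "psi f x = (if f x > 0 then ereal (- ln (f x)) else \<infinity>)"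

definition epi :: "('a \<Rightarrow> ereal) \<Rightarrow> ('a \<times> real) set" where
  "epi \<psi> = {(x, \<xi>). \<psi> x < \<infinity> \<and> ereal \<xi> \<ge> \<psi> x}"

definition lift :: "('a::topological_space \<Rightarrow> real) \<Rightarrow> ('a \<times> real) set" where
  "lift f = {(x, y). x \<in> closure (supp f) \<and> \<bar>y\<bar> \<le> f x}"

definition normal_cone :: "'a::real_inner set \<Rightarrow> 'a \<Rightarrow> 'a set" where
  "normal_cone A a0 = {v. \<forall>\<epsilon>>0. \<exists>\<delta>>0. \<forall>a\<in>A. norm (a - a0) \<le> \<delta> \<longrightarrow>
       inner v (a - a0) \<le> \<epsilon> * norm (a - a0)}"

end

theory Submission
  imports Defs
begin

text \<open>Since \<open>f u > 0\<close>, the map \<open>(x, s) \<mapsto> (x, - ln s)\<close> carries \<open>lift f\<close> into \<open>epi (psi f)\<close>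
  near \<open>(u, f u)\<close>, and \<open>(x, \<xi>) \<mapsto> (x, exp (- \<xi>))\<close> carries \<open>epi (psi f)\<close> into \<open>lift f\<close>.
  Fr\'echet normals pull back along a differentiable map by the adjoint of its derivative,
  which here rescales the last coordinate by \<open>-1 / f u\<close>, respectively \<open>- f u\<close>. Likewise
  \<open>x \<mapsto> (x, f u)\<close> carries the superlevel set \<open>[f \<ge> f u]\<close> into \<open>lift f\<close>, and the adjoint of
  its derivative is the projection \<open>P\<^sub>d\<close>.\<close>

lemma has_derivative_local_Lipschitz_at:
  assumes "(\<Phi> has_derivative \<Phi>') (at a0)"
  obtains K \<delta> where "K > 0" "\<delta> > 0"
    "\<And>a. norm (a - a0) < \<delta> \<Longrightarrow> norm (\<Phi> a - \<Phi> a0) \<le> K * norm (a - a0)"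
proof -
  obtain K where K: "K > 0" "\<And>h. norm (\<Phi>' h) \<le> norm h * K"
    using assms bounded_linear.pos_bounded by blast
  obtain \<delta> where \<delta>: "\<delta> > 0"
    "\<And>a. norm (a - a0) < \<delta> \<Longrightarrow> norm (\<Phi> a - \<Phi> a0 - \<Phi>' (a - a0)) \<le> 1 * norm (a - a0)"
    using assms unfolding has_derivative_at_alt by (meson zero_less_one)
  have "norm (\<Phi> a - \<Phi> a0) \<le> (K + 1) * norm (a - a0)" if "norm (a - a0) < \<delta>" for a
  proof -
    have "norm (\<Phi> a - \<Phi> a0) \<le> norm (\<Phi>' (a - a0)) + norm (\<Phi> a - \<Phi> a0 - \<Phi>' (a - a0))"
      by (metis add_diff_cancel_left' diff_add_cancel norm_triangle_ineq)
    also have "\<dots> \<le> norm (a - a0) * K + 1 * norm (a - a0)"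
      using K(2) \<delta>(2)[OF that] by (rule add_mono)
    finally show ?thesis by (simp add: algebra_simps)
  qed
  with K(1) \<delta>(1) show thesis
    by (intro that[of "K + 1" \<delta>]) auto
qed

lemma normal_cone_pullback:
  fixes \<Phi> :: "'a::real_inner \<Rightarrow> 'b::real_inner"
  assumes deriv: "(\<Phi> has_derivative \<Phi>') (at a0)"
    and maps_into: "\<exists>\<delta>>0. \<forall>a\<in>A. norm (a - a0) \<le> \<delta> \<longrightarrow> \<Phi> a \<in> B"
    and adjoint: "\<And>h. inner w' h = inner w (\<Phi>' h)"
    and normal: "w \<in> normal_cone B (\<Phi> a0)"
  shows "w' \<in> normal_cone A a0"
  unfolding normal_cone_def
proof (intro CollectI allI impI)
  fix \<epsilon> :: real assume "\<epsilon> > 0"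
  obtain \<delta>0 where \<delta>0: "\<delta>0 > 0" "\<And>a. a \<in> A \<Longrightarrow> norm (a - a0) \<le> \<delta>0 \<Longrightarrow> \<Phi> a \<in> B"
    using maps_into by blast
  obtain K \<delta>L where K: "K > 0" "\<delta>L > 0"
    and Lipschitz: "\<And>a. norm (a - a0) < \<delta>L \<Longrightarrow> norm (\<Phi> a - \<Phi> a0) \<le> K * norm (a - a0)"
    using has_derivative_local_Lipschitz_at[OF deriv] by blast
  define e1 where "e1 = \<epsilon> / (2 * K)"
  define e2 where "e2 = \<epsilon> / (2 * (norm w + 1))"
  have "e1 > 0" "e2 > 0" using \<open>\<epsilon> > 0\<close> K unfolding e1_def e2_def
    by (auto intro!: divide_pos_pos add_nonneg_pos)
  obtain \<delta>1 where \<delta>1: "\<delta>1 > 0" "\<And>b. b \<in> B \<Longrightarrow> norm (b - \<Phi> a0) \<le> \<delta>1 \<Longrightarrow>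
      inner w (b - \<Phi> a0) \<le> e1 * norm (b - \<Phi> a0)"
    using normal \<open>e1 > 0\<close> unfolding normal_cone_def by blast
  obtain \<delta>2 where \<delta>2: "\<delta>2 > 0" "\<And>a. norm (a - a0) < \<delta>2 \<Longrightarrow>
      norm (\<Phi> a - \<Phi> a0 - \<Phi>' (a - a0)) \<le> e2 * norm (a - a0)"
    using deriv \<open>e2 > 0\<close> unfolding has_derivative_at_alt by blast
  define \<delta> where "\<delta> = Min {\<delta>0, \<delta>L / 2, \<delta>2 / 2, \<delta>1 / K}"
  have "\<delta> > 0" using \<delta>0(1) K \<delta>1(1) \<delta>2(1) unfolding \<delta>_def by simp
  moreover have "inner w' (a - a0) \<le> \<epsilon> * norm (a - a0)"
    if "a \<in> A" "norm (a - a0) \<le> \<delta>" for a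
  proof -
    let ?d = "norm (a - a0)" and ?r = "\<Phi> a - \<Phi> a0 - \<Phi>' (a - a0)"
    have close: "?d \<le> \<delta>0" "?d < \<delta>L" "?d < \<delta>2" "K * ?d \<le> \<delta>1"
      using that(2) K \<delta>2(1) unfolding \<delta>_def by (auto simp: field_simps)
    have step: "norm (\<Phi> a - \<Phi> a0) \<le> K * ?d"
      using Lipschitz close(2) .
    have "inner w (\<Phi> a - \<Phi> a0) \<le> e1 * norm (\<Phi> a - \<Phi> a0)"
      using \<delta>1(2) \<delta>0(2)[OF that(1) close(1)] step close(4) by force
    also have "\<dots> \<le> e1 * (K * ?d)"
      using step \<open>e1 > 0\<close> by (intro mult_left_mono) auto
    also have "\<dots> = \<epsilon> / 2 * ?d"
      using K unfolding e1_def by simp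
    finally have main: "inner w (\<Phi> a - \<Phi> a0) \<le> \<epsilon> / 2 * ?d" .
    have "- inner w ?r \<le> norm w * norm ?r"
      using norm_cauchy_schwarz[of "- w" ?r] by simp
    also have "\<dots> \<le> (norm w + 1) * (e2 * ?d)"
      using \<delta>2(2)[OF close(3)] by (intro mult_mono) auto
    also have "\<dots> = \<epsilon> / 2 * ?d"
    proof -
      have "norm w + 1 \<noteq> 0" by (metis norm_ge_zero add_nonneg_pos zero_less_one less_irrefl)
      then show ?thesis unfolding e2_def by (simp add: field_simps)
    qed
    finally have remainder: "- inner w ?r \<le> \<epsilon> / 2 * ?d" .
    have "inner w' (a - a0) = inner w (\<Phi> a - \<Phi> a0) - inner w ?r"
      unfolding adjoint inner_diff_right[of w "\<Phi> a - \<Phi> a0" "\<Phi>' (a - a0)"] by simp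
    with main remainder show ?thesis by simp
  qed
  ultimately show "\<exists>\<delta>>0. \<forall>a\<in>A. norm (a - a0) \<le> \<delta> \<longrightarrow> inner w' (a - a0) \<le> \<epsilon> * norm (a - a0)"
    by blast
qed

lemma normal_cone_vertical_reparametrization:
  fixes A B :: "('a::real_inner \<times> real) set"
  assumes deriv: "(g has_real_derivative L) (at s0)"
    and maps_into: "\<exists>\<delta>>0. \<forall>(x, s)\<in>A. norm ((x, s) - (u, s0)) \<le> \<delta> \<longrightarrow> (x, g s) \<in> B"
    and normal: "(v, \<mu>) \<in> normal_cone B (u, g s0)"
  shows "(v, \<mu> * L) \<in> normal_cone A (u, s0)"
proof (rule normal_cone_pullback)
  show "((\<lambda>p. (fst p, g (snd p))) has_derivative (\<lambda>p. (fst p, snd p * L))) (at (u, s0))"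
    by (intro has_derivative_Pair has_derivative_fst has_derivative_snd has_derivative_ident
        DERIV_compose_FDERIV) (simp add: deriv)
  show "\<exists>\<delta>>0. \<forall>a\<in>A. norm (a - (u, s0)) \<le> \<delta> \<longrightarrow> (fst a, g (snd a)) \<in> B"
    using maps_into by fastforce
  show "inner (v, \<mu> * L) h = inner (v, \<mu>) (fst h, snd h * L)" for h
    by (cases h) simp
  show "(v, \<mu>) \<in> normal_cone B (fst (u, s0), g (snd (u, s0)))"
    using normal by simp
qed

lemma mem_epi_psi_iff: "(x, \<xi>) \<in> epi (psi f) \<longleftrightarrow> 0 < f x \<and> - ln (f x) \<le> \<xi>"
  unfolding epi_def psi_def by auto

lemma mem_liftI:
  assumes "0 < f x" "\<bar>y\<bar> \<le> f x"
  shows "(x, y) \<in> lift f"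
proof -
  have "x \<in> supp f" using assms(1) by (simp add: supp_def)
  then show ?thesis using assms(2) closure_subset unfolding lift_def by blast
qed

lemma epi_psi_to_lift:
  assumes "(x, \<xi>) \<in> epi (psi f)"
  shows "(x, exp (- \<xi>)) \<in> lift f"
proof (rule mem_liftI)
  show "0 < f x" using assms by (simp add: mem_epi_psi_iff)
  moreover have "exp (- \<xi>) \<le> exp (ln (f x))"
    using assms by (subst exp_le_cancel_iff) (simp add: mem_epi_psi_iff)
  ultimately show "\<bar>exp (- \<xi>)\<bar> \<le> f x" by simp
qed

lemma lift_to_epi_psi:
  assumes "(x, s) \<in> lift f" "0 < s"
  shows "(x, - ln s) \<in> epi (psi f)"
proof -
  have "s \<le> f x" using assms(1) unfolding lift_def by auto
  with assms(2) show ?thesis by (simp add: mem_epi_psi_iff)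
qed

lemma normal_cone_epi_psi_iff_lift:
  assumes c: "0 < f u"
  shows "(v, \<nu>) \<in> normal_cone (epi (psi f)) (u, - ln (f u)) \<longleftrightarrow>
         (v, - \<nu> / f u) \<in> normal_cone (lift f) (u, f u)"
proof -
  have lift_near_to_epi: "\<exists>\<delta>>0. \<forall>(x, s)\<in>lift f. norm ((x, s) - (u, f u)) \<le> \<delta> \<longrightarrow>
      (x, - ln s) \<in> epi (psi f)"
  proof (intro exI[of _ "f u / 2"] conjI ballI impI; clarify?)
    fix x s assume "(x, s) \<in> lift f" "norm ((x, s) - (u, f u)) \<le> f u / 2"
    moreover have "\<bar>s - f u\<bar> \<le> norm ((x, s) - (u, f u))"
      using norm_snd_le[of "s - f u" "x - u"] by simp
    ultimately show "(x, - ln s) \<in> epi (psi f)" using c by (intro lift_to_epi_psi) auto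
  qed (use c in simp)
  have "(v, \<nu> * - inverse (f u)) \<in> normal_cone (lift f) (u, f u)"
    if "(v, \<nu>) \<in> normal_cone (epi (psi f)) (u, - ln (f u))"
    using c that by (intro normal_cone_vertical_reparametrization[OF _ lift_near_to_epi])
      (auto intro!: derivative_eq_intros simp: inverse_eq_divide)
  moreover have "(v, - \<nu> / f u * - f u) \<in> normal_cone (epi (psi f)) (u, - ln (f u))"
    if "(v, - \<nu> / f u) \<in> normal_cone (lift f) (u, f u)"
    using c that epi_psi_to_lift
    by (intro normal_cone_vertical_reparametrization[where g = "\<lambda>\<xi>. exp (- \<xi>)"])
      (auto intro!: derivative_eq_intros)
  ultimately show ?thesis using c by (auto simp: field_simps)
qed

lemma fst_normal_cone_lift_subset:
  assumes c: "0 < f u"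
  shows "fst ` normal_cone (lift f) (u, f u) \<subseteq> normal_cone {x. f u \<le> f x} u"
proof clarify
  fix w \<mu> assume normal: "(w, \<mu>) \<in> normal_cone (lift f) (u, f u)"
  show "fst (w, \<mu>) \<in> normal_cone {x. f u \<le> f x} u"
  proof (rule normal_cone_pullback[where \<Phi> = "\<lambda>x. (x, f u)" and \<Phi>' = "\<lambda>h. (h, 0)"])
    show "((\<lambda>x. (x, f u)) has_derivative (\<lambda>h. (h, 0))) (at u)"
      by (intro has_derivative_Pair has_derivative_ident has_derivative_const)
    show "\<exists>\<delta>>0. \<forall>x\<in>{x. f u \<le> f x}. norm (x - u) \<le> \<delta> \<longrightarrow> (x, f u) \<in> lift f"
      using c by (auto intro!: exI[of _ 1] mem_liftI)
  qed (use normal in simp_all)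
qed

theorem mainTheorem7:
  fixes f :: "'a::euclidean_space \<Rightarrow> real" and u v :: 'a and \<nu> :: real
  assumes "log_concave f" and "usc f" and "u \<in> supp f"
  shows "((v, \<nu>) \<in> normal_cone (epi (psi f)) (u, real_of_ereal (psi f u)) \<longleftrightarrow>
           (v, - \<nu> / f u) \<in> normal_cone (lift f) (u, f u))
         \<and> fst ` normal_cone (lift f) (u, f u) \<subseteq> normal_cone {x. f x \<ge> f u} u"
proof -
  have pos: "0 < f u" using assms(3) by (simp add: supp_def)
  then have "real_of_ereal (psi f u) = - ln (f u)" by (simp add: psi_def)
  with pos normal_cone_epi_psi_iff_lift[of f u v \<nu>] fst_normal_cone_lift_subset[of f u]
  show ?thesis by simp
qed

end
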